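(* Let $\sigma:\mathbb{R}\to\mathbb{R}$ be bounded and differentiable with bounded derivative. Let $d,r,L,K_n,n\in\mathbb{N}$ with $r\ge 2d$, $c_2>0$, data $(X_1,Y_1),\dots,(X_n,Y_n)\in\mathbb{R}^d\times\mathbb{R}$, and let $\alpha_n\ge 1$, $L_n>0$, $t_n\ge L_n$, $\gamma_n^*\ge 1$, $B_n\ge 1$. Let $\mathbf{w},\mathbf{v}$ be weight vectors such that $|w^{(L)}_{1,1,k}|\le\gamma_n^*$ for $k=1,\dots,K_n$, $|w^{(l)}_{k,i,j}|\le B_n$ for all $k,i,j$ and $l=1,\dots,L-1$, and \[ \|\mathbf{w}-\mathbf{v}\|_\infty^2\le \frac{2t_n}{L_n}\cdot\max\{F_n(\mathbf{v}),1\}. \] Then \[ \|(\nabla_{\mathbf{w}}F_n)(\mathbf{w})\|\le c_5\cdot K_n^{3/2}\cdot B_n^{2L}\cdot(\gamma_n^* )^2\cdot\alpha_n^2\cdot\sqrt{\frac{t_n}{L_n}\cdot\max\{F_n(\mathbf{v}),1\}}, \] where $c_5>0$ is a constant depending only on $\sigma,d,r,L,c_2$.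
   Context: For a weight vector $\mathbf{w}=(w^{(l)}_{k,i,j})$ define $f_{\mathbf{w}}(x)=\sum_{j=1}^{K_n} w^{(L)}_{1,1,j}f^{(L)}_{j,1}(x)$ ($x\in\mathbb{R}^d$), where for $k\in\{1,\dots,K_n\}$, $i\in\{1,\dots,r\}$: $f^{(l)}_{k,i}(x)=\sigma\big(\sum_{j=1}^r w^{(l-1)}_{k,i,j}f^{(l-1)}_{k,j}(x)+w^{(l-1)}_{k,i,0}\big)$ for $l=2,\dots,L$ and $f^{(1)}_{k,i}(x)=\sigma\big(\sum_{j=1}^d w^{(0)}_{k,i,j}x^{(j)}+w^{(0)}_{k,i,0}\big)$. The weight vector consists of all these weights (outer weights $w^{(L)}_{1,1,j}$, $j=1,\dots,K_n$; $w^{(l)}_{k,i,j}$, $1\le l\le L-1$, $j\in\{0,\dots,r\}$; $w^{(0)}_{k,i,j}$, $j\in\{0,\dots,d\}$). Define $F_n(\mathbf{w})=\frac1n\sum_{i=1}^n|f_{\mathbf{w}}(X_i)-Y_i|^2\,1_{[-\alpha_n,\alpha_n]^d}(X_i)+c_2\sum_{j=1}^{K_n}|w^{(L)}_{1,1,j}|^2$. $\|\cdot\|$ is the Euclidean norm and $\|\cdot\|_\infty$ the maximum norm of a weight vector. *)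

theory Defs
  imports "HOL-Analysis.Analysis"
begin

text \<open>A weight vector is a function on index quadruples (l,k,i,j) meaning w^{(l)}_{k,i,j}.
  Inputs x in R^d are functions nat => real with components x 1, ..., x d.\<close>

type_synonym weights = "nat \<times> nat \<times> nat \<times> nat \<Rightarrow> real"

definition weight_idx :: "nat \<Rightarrow> nat \<Rightarrow> nat \<Rightarrow> nat \<Rightarrow> (nat \<times> nat \<times> nat \<times> nat) set" where
  "weight_idx d r L K =
     {(L,1,1,j) | j. j \<in> {1..K}}
   \<union> {(l,k,i,j) | l k i j. l \<in> {1..L-1} \<and> k \<in> {1..K} \<and> i \<in> {1..r} \<and> j \<in> {0..r}}
   \<union> {(0,k,i,j) | k i j. k \<in> {1..K} \<and> i \<in> {1..r} \<and> j \<in> {0..d}}"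

text \<open>hidden_layer ... l k i x = f^{(l)}_{k,i}(x) for l >= 1 (value at l = 0 is junk).\<close>
fun hidden_layer :: "(real \<Rightarrow> real) \<Rightarrow> nat \<Rightarrow> nat \<Rightarrow> weights \<Rightarrow> nat \<Rightarrow> nat \<Rightarrow> nat \<Rightarrow> (nat \<Rightarrow> real) \<Rightarrow> real" where
  "hidden_layer \<sigma> d r w 0 k i x = 0"
| "hidden_layer \<sigma> d r w (Suc 0) k i x =
     \<sigma> ((\<Sum>j=1..d. w (0,k,i,j) * x j) + w (0,k,i,0))"
| "hidden_layer \<sigma> d r w (Suc (Suc l)) k i x =
     \<sigma> ((\<Sum>j=1..r. w (Suc l,k,i,j) * hidden_layer \<sigma> d r w (Suc l) k j x) + w (Suc l,k,i,0))"

definition net :: "(real \<Rightarrow> real) \<Rightarrow> nat \<Rightarrow> nat \<Rightarrow> nat \<Rightarrow> nat \<Rightarrow> weights \<Rightarrow> (nat \<Rightarrow> real) \<Rightarrow> real" where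
  "net \<sigma> d r L K w x = (\<Sum>j=1..K. w (L,1,1,j) * hidden_layer \<sigma> d r w L j 1 x)"

definition Fn :: "(real \<Rightarrow> real) \<Rightarrow> nat \<Rightarrow> nat \<Rightarrow> nat \<Rightarrow> nat \<Rightarrow> real \<Rightarrow> nat \<Rightarrow>
    (nat \<Rightarrow> nat \<Rightarrow> real) \<Rightarrow> (nat \<Rightarrow> real) \<Rightarrow> real \<Rightarrow> weights \<Rightarrow> real" where
  "Fn \<sigma> d r L K c2 n X Y \<alpha> w =
     (1 / real n) * (\<Sum>i=1..n. (net \<sigma> d r L K w (X i) - Y i)^2
                         * (if (\<forall>j\<in>{1..d}. \<bar>X i j\<bar> \<le> \<alpha>) then 1 else 0))
     + c2 * (\<Sum>j=1..K. (w (L,1,1,j))^2)"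

definition partial_w :: "(weights \<Rightarrow> real) \<Rightarrow> weights \<Rightarrow> nat \<times> nat \<times> nat \<times> nat \<Rightarrow> real" where
  "partial_w F w p = deriv (\<lambda>t. F (w(p := t))) (w p)"

definition grad_norm :: "nat \<Rightarrow> nat \<Rightarrow> nat \<Rightarrow> nat \<Rightarrow> (weights \<Rightarrow> real) \<Rightarrow> weights \<Rightarrow> real" where
  "grad_norm d r L K F w = sqrt (\<Sum>p\<in>weight_idx d r L K. (partial_w F w p)^2)"

definition max_norm :: "nat \<Rightarrow> nat \<Rightarrow> nat \<Rightarrow> nat \<Rightarrow> weights \<Rightarrow> real" where
  "max_norm d r L K w = Max ((\<lambda>p. \<bar>w p\<bar>) ` weight_idx d r L K)"

end

theory Submission
  imports Defs
begin

(*
  A partial derivative of F_n at w is bounded by the linear coefficient A of any estimate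
  |F_n(w + s e_p) - F_n(w)| <= (A + C |s|) |s|.  Changing one weight by s moves every hidden
  neuron by a constant times B^(L-1) alpha |s| (induction over the layers, sigma being bounded
  and Lipschitz), and since only one outer weight and one subnetwork depend on that weight,
  the network output moves by N |s| with N of order gamma B^(L-1) alpha, independent of K.
  For the squared loss this gives A = 2 N E + 2 c2 gamma, where E is the empirical L1
  residual of the network at w.  Closeness of w and v in the maximum norm shifts E by
  O(K gamma S) from the residual at v, which by Cauchy-Schwarz is at most
  sqrt(F_n(v)) <= S = sqrt(t_n / L_n * max{F_n(v), 1}).  There are O(K) weights, so the
  Euclidean norm of the gradient is O(sqrt K) times the bound on a partial derivative.
*)

lemma one_le_mult: "1 \<le> a \<Longrightarrow> 1 \<le> b \<Longrightarrow> 1 \<le> a * (b::'a::linordered_semidom)"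
  using mult_mono[of 1 a 1 b] order_trans[OF zero_le_one, of a] by simp

lemma powr_three_halves: "0 \<le> x \<Longrightarrow> x powr (3/2) = x * sqrt x"
  using powr_add[of x 1 "1/2"] by (simp add: powr_half_sqrt)

lemma lipschitz_of_bounded_deriv:
  fixes f :: "real \<Rightarrow> real"
  assumes "\<And>x. f differentiable (at x)" and "\<And>x. \<bar>deriv f x\<bar> \<le> M"
  shows "\<bar>f a - f b\<bar> \<le> M * \<bar>a - b\<bar>"
  using field_differentiable_bound[of UNIV f "deriv f" M a b] assms
  by (simp add: DERIV_deriv_iff_real_differentiable)

lemma has_real_derivative_abs_le_of_quadratic_bound:
  fixes g :: "real \<Rightarrow> real"
  assumes D: "(g has_real_derivative D) (at t)"
    and bound: "\<And>s. \<bar>g s - g t\<bar> \<le> (A + C * \<bar>s - t\<bar>) * \<bar>s - t\<bar>"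
  shows "\<bar>D\<bar> \<le> A"
proof -
  have "((\<lambda>h. \<bar>(g (t + h) - g t) / h\<bar>) \<longlongrightarrow> \<bar>D\<bar>) (at 0)"
    using D by (intro tendsto_rabs) (simp add: DERIV_def)
  moreover have "((\<lambda>h. A + C * \<bar>h\<bar>) \<longlongrightarrow> A) (at (0::real))"
    by (auto intro!: tendsto_eq_intros)
  moreover have "\<forall>\<^sub>F h in at 0. \<bar>(g (t + h) - g t) / h\<bar> \<le> A + C * \<bar>h\<bar>"
    unfolding eventually_at_filter
    by (intro always_eventually) (use bound[of "t + _"] in \<open>auto simp: abs_divide pos_divide_le_eq\<close>)
  ultimately show ?thesis
    using tendsto_le[OF at_neq_bot] by blast
qed

lemma abs_affine_diff_le:
  fixes a a' h h' :: "'a \<Rightarrow> 'b::linordered_idom"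
  shows "\<bar>((\<Sum>j\<in>J. a' j * h' j) + c') - ((\<Sum>j\<in>J. a j * h j) + c)\<bar>
    \<le> (\<Sum>j\<in>J. \<bar>a' j - a j\<bar> * \<bar>h' j\<bar> + \<bar>a j\<bar> * \<bar>h' j - h j\<bar>) + \<bar>c' - c\<bar>"
proof -
  have "((\<Sum>j\<in>J. a' j * h' j) + c') - ((\<Sum>j\<in>J. a j * h j) + c)
      = (\<Sum>j\<in>J. (a' j - a j) * h' j + a j * (h' j - h j)) + (c' - c)"
    by (simp add: ring_distribs sum_subtractf sum.distrib)
  also have "\<bar>\<dots>\<bar> \<le> (\<Sum>j\<in>J. \<bar>(a' j - a j) * h' j + a j * (h' j - h j)\<bar>) + \<bar>c' - c\<bar>"
    by (rule order_trans[OF abs_triangle_ineq add_mono[OF sum_abs order_refl]])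
  also have "\<dots> \<le> (\<Sum>j\<in>J. \<bar>a' j - a j\<bar> * \<bar>h' j\<bar> + \<bar>a j\<bar> * \<bar>h' j - h j\<bar>) + \<bar>c' - c\<bar>"
    by (intro add_mono sum_mono order_refl) (metis abs_mult abs_triangle_ineq)
  finally show ?thesis .
qed

lemma sum_le_of_single_support:
  assumes "finite A" and "\<And>j. j \<in> A \<Longrightarrow> j \<noteq> i \<Longrightarrow> f j = 0"
    and "\<And>j. j \<in> A \<Longrightarrow> f j \<le> M" and "0 \<le> M"
  shows "sum f A \<le> (M::'b::linordered_idom)"
proof -
  have "sum f A = sum f (A \<inter> {i})"
    by (rule sum.mono_neutral_right) (use assms in auto)
  then show ?thesis
    using assms by (cases "i \<in> A") auto
qed

lemma abs_power2_diff_le: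
  fixes a a' y :: "'a::linordered_idom"
  assumes "\<bar>a' - a\<bar> \<le> D"
  shows "\<bar>(a' - y)^2 - (a - y)^2\<bar> \<le> D * (D + 2 * \<bar>a - y\<bar>)"
proof -
  have "(a' - y)^2 - (a - y)^2 = (a' - a) * ((a' - a) + 2 * (a - y))"
    by (simp add: power2_eq_square algebra_simps)
  then have "\<bar>(a' - y)^2 - (a - y)^2\<bar> = \<bar>a' - a\<bar> * \<bar>(a' - a) + 2 * (a - y)\<bar>"
    by (simp only: abs_mult)
  also have "\<dots> \<le> \<bar>a' - a\<bar> * (\<bar>a' - a\<bar> + 2 * \<bar>a - y\<bar>)"
    by (intro mult_left_mono order_trans[OF abs_triangle_ineq])
      (simp_all only: abs_mult abs_numeral order_refl abs_ge_zero)
  also have "\<dots> \<le> D * (D + 2 * \<bar>a - y\<bar>)"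
    using assms by (intro mult_mono add_mono) auto
  finally show ?thesis .
qed

lemma abs_sum_sq_residual_diff_le:
  fixes f f' y I :: "'a \<Rightarrow> real"
  assumes close: "\<And>i. i \<in> A \<Longrightarrow> I i \<noteq> 0 \<Longrightarrow> \<bar>f' i - f i\<bar> \<le> D"
    and I: "\<And>i. i \<in> A \<Longrightarrow> 0 \<le> I i"
  shows "\<bar>(\<Sum>i\<in>A. (f' i - y i)^2 * I i) - (\<Sum>i\<in>A. (f i - y i)^2 * I i)\<bar>
    \<le> D^2 * (\<Sum>i\<in>A. I i) + 2 * D * (\<Sum>i\<in>A. \<bar>f i - y i\<bar> * I i)"
proof -
  have "\<bar>(f' i - y i)^2 * I i - (f i - y i)^2 * I i\<bar> \<le> D^2 * I i + 2 * D * (\<bar>f i - y i\<bar> * I i)"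
    if i: "i \<in> A" for i
  proof (cases "I i = 0")
    case False
    have "\<bar>(f' i - y i)^2 * I i - (f i - y i)^2 * I i\<bar> = \<bar>(f' i - y i)^2 - (f i - y i)^2\<bar> * I i"
      using I[OF i] by (simp add: abs_mult flip: left_diff_distrib)
    also have "\<dots> \<le> D * (D + 2 * \<bar>f i - y i\<bar>) * I i"
      using abs_power2_diff_le[OF close[OF i False]] I[OF i] by (rule mult_right_mono)
    also have "\<dots> = D^2 * I i + 2 * D * (\<bar>f i - y i\<bar> * I i)"
      by (simp add: power2_eq_square algebra_simps)
    finally show ?thesis .
  qed simp
  then have "(\<Sum>i\<in>A. \<bar>(f' i - y i)^2 * I i - (f i - y i)^2 * I i\<bar>)
      \<le> (\<Sum>i\<in>A. D^2 * I i + 2 * D * (\<bar>f i - y i\<bar> * I i))"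
    by (rule sum_mono)
  then show ?thesis
    by (simp add: sum.distrib sum_distrib_left order_trans[OF sum_abs] flip: sum_subtractf)
qed

section \<open>The network as a function of its weights\<close>

lemma fun_upd_differentiable: "(\<lambda>s. (w(p := s)) q) differentiable (at (t::real))"
  by (cases "q = p") simp_all

lemma differentiable_compose_everywhere:
  fixes f \<sigma> :: "real \<Rightarrow> real"
  assumes "f differentiable (at t)" and "\<And>x. \<sigma> differentiable (at x)"
  shows "(\<lambda>s. \<sigma> (f s)) differentiable (at t)"
  using differentiable_chain_at[OF assms(1) assms(2)] by (simp add: o_def)

lemma hidden_layer_differentiable_weight:
  assumes "\<And>x. \<sigma> differentiable (at x)"
  shows "(\<lambda>s. hidden_layer \<sigma> d r (w(p := s)) l k i x) differentiable (at t)"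
  using assms
proof (induction \<sigma> d r w l k i x rule: hidden_layer.induct)
  case (2 \<sigma> d r w k i x)
  show ?case
    unfolding hidden_layer.simps
    by (rule differentiable_compose_everywhere[OF _ "2.prems"])
      (intro differentiable_add differentiable_sum ballI differentiable_mult
        fun_upd_differentiable differentiable_const finite_atLeastAtMost)
next
  case (3 \<sigma> d r w l k i x)
  show ?case
    unfolding hidden_layer.simps
    by (rule differentiable_compose_everywhere[OF _ "3.prems"])
      (intro differentiable_add differentiable_sum ballI differentiable_mult
        fun_upd_differentiable "3.IH"[OF _ "3.prems"] finite_atLeastAtMost)
qed simp

lemma Fn_differentiable_weight:
  assumes "\<And>x. \<sigma> differentiable (at x)"
  shows "(\<lambda>s. Fn \<sigma> d r L K c2 n X Y \<alpha> (w(p := s))) differentiable (at t)"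
  unfolding Fn_def net_def
  by (intro differentiable_add differentiable_sum ballI differentiable_mult fun_upd_differentiable
      differentiable_power differentiable_diff hidden_layer_differentiable_weight assms
      differentiable_const) simp_all

lemma hidden_layer_weight_local:
  assumes "\<And>l' i j. l' < l \<Longrightarrow> w (l',k,i,j) = w' (l',k,i,j)"
  shows "hidden_layer \<sigma> d r w l k i x = hidden_layer \<sigma> d r w' l k i x"
  using assms by (induction \<sigma> d r w l k i x rule: hidden_layer.induct) auto

lemma abs_sum_power2_update_diff_le:
  fixes w :: weights
  assumes outer: "\<And>j. j \<in> {1..K} \<Longrightarrow> \<bar>w (L,1,1,j)\<bar> \<le> \<gamma>" and \<gamma>: "0 \<le> \<gamma>"
  shows "\<bar>(\<Sum>j=1..K. ((w(p := s)) (L,1,1,j))^2) - (\<Sum>j=1..K. (w (L,1,1,j))^2)\<bar>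
    \<le> \<bar>s - w p\<bar> * (\<bar>s - w p\<bar> + 2 * \<gamma>)"
proof -
  obtain pl pk pi pj where p: "p = (pl,pk,pi,pj)"
    by (cases p)
  have "\<bar>((w(p := s)) (L,1,1,j))^2 - (w (L,1,1,j))^2\<bar> \<le> \<bar>s - w p\<bar> * (\<bar>s - w p\<bar> + 2 * \<gamma>)"
    if "j \<in> {1..K}" for j
  proof -
    have "\<bar>(w(p := s)) (L,1,1,j) - w (L,1,1,j)\<bar> \<le> \<bar>s - w p\<bar>"
      by (cases "(L,1,1,j) = p") auto
    from abs_power2_diff_le[OF this, of 0]
    have "\<bar>((w(p := s)) (L,1,1,j))^2 - (w (L,1,1,j))^2\<bar> \<le> \<bar>s - w p\<bar> * (\<bar>s - w p\<bar> + 2 * \<bar>w (L,1,1,j)\<bar>)"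
      by simp
    also have "\<dots> \<le> \<bar>s - w p\<bar> * (\<bar>s - w p\<bar> + 2 * \<gamma>)"
      using outer[OF that] by (intro mult_left_mono) auto
    finally show ?thesis .
  qed
  then have "(\<Sum>j=1..K. \<bar>((w(p := s)) (L,1,1,j))^2 - (w (L,1,1,j))^2\<bar>) \<le> \<bar>s - w p\<bar> * (\<bar>s - w p\<bar> + 2 * \<gamma>)"
    by (rule sum_le_of_single_support[where i = pj, rotated 2]) (simp_all add: p \<gamma>)
  then show ?thesis
    by (simp add: order_trans[OF sum_abs] flip: sum_subtractf)
qed

lemma weight_idx_subset:
  "weight_idx d r L K \<subseteq> ({L} \<times> {1} \<times> {1} \<times> {1..K})
     \<union> ({1..L-1} \<times> {1..K} \<times> {1..r} \<times> {0..r}) \<union> ({0} \<times> {1..K} \<times> {1..r} \<times> {0..d})"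
  unfolding weight_idx_def by auto

lemma finite_weight_idx: "finite (weight_idx d r L K)"
  by (rule finite_subset[OF weight_idx_subset]) simp

lemma card_weight_idx_le: "card (weight_idx d r L K) \<le> K * (1 + (L-1)*r*(r+1) + r*(d+1))"
proof -
  define U1 where "U1 = {L} \<times> {1::nat} \<times> {1::nat} \<times> {1..K}"
  define U2 where "U2 = {1..L-1} \<times> {1..K} \<times> {1..r} \<times> {0..r}"
  define U3 where "U3 = {0::nat} \<times> {1..K} \<times> {1..r} \<times> {0..d}"
  have "card (weight_idx d r L K) \<le> card (U1 \<union> U2 \<union> U3)"
    unfolding U1_def U2_def U3_def by (rule card_mono[OF _ weight_idx_subset]) simp
  also have "\<dots> \<le> card U1 + card U2 + card U3"
    using card_Un_le[of "U1 \<union> U2" U3] card_Un_le[of U1 U2] by linarith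
  also have "\<dots> = K * (1 + (L-1)*r*(r+1) + r*(d+1))"
    by (simp add: U1_def U2_def U3_def card_cartesian_product distrib_left mult_ac)
  finally show ?thesis .
qed

lemma abs_le_max_norm: "p \<in> weight_idx d r L K \<Longrightarrow> \<bar>u p\<bar> \<le> max_norm d r L K u"
  unfolding max_norm_def by (rule Max_ge) (simp_all add: finite_weight_idx)

lemma grad_norm_le:
  assumes "\<And>p. p \<in> weight_idx d r L K \<Longrightarrow> \<bar>partial_w F w p\<bar> \<le> A"
  shows "grad_norm d r L K F w \<le> sqrt (real (card (weight_idx d r L K))) * A"
proof (cases "weight_idx d r L K = {}")
  case False
  then have A: "0 \<le> A"
    using assms by (meson abs_ge_zero equals0I order_trans)
  have "(\<Sum>p\<in>weight_idx d r L K. (partial_w F w p)^2) \<le> real (card (weight_idx d r L K)) * A^2"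
    using assms A by (intro sum_bounded_above) (metis abs_ge_zero power2_abs power_mono)
  then show ?thesis
    unfolding grad_norm_def using A by (metis real_sqrt_abs real_sqrt_le_mono real_sqrt_mult abs_of_nonneg)
qed (simp add: grad_norm_def)

definition l1_risk :: "(real \<Rightarrow> real) \<Rightarrow> nat \<Rightarrow> nat \<Rightarrow> nat \<Rightarrow> nat \<Rightarrow> nat \<Rightarrow>
    (nat \<Rightarrow> nat \<Rightarrow> real) \<Rightarrow> (nat \<Rightarrow> real) \<Rightarrow> real \<Rightarrow> weights \<Rightarrow> real" where
  "l1_risk \<sigma> d r L K n X Y \<alpha> w =
     (1 / real n) * (\<Sum>i=1..n. \<bar>net \<sigma> d r L K w (X i) - Y i\<bar>
                         * (if (\<forall>j\<in>{1..d}. \<bar>X i j\<bar> \<le> \<alpha>) then 1 else 0))"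

lemma l1_risk_nonneg: "0 \<le> l1_risk \<sigma> d r L K n X Y \<alpha> w"
  by (simp add: l1_risk_def sum_nonneg)

lemma l1_risk_le_sqrt_Fn:
  assumes "0 \<le> c2"
  shows "l1_risk \<sigma> d r L K n X Y \<alpha> v \<le> sqrt (Fn \<sigma> d r L K c2 n X Y \<alpha> v)"
proof (rule real_le_rsqrt)
  define I where "I i = (if (\<forall>j\<in>{1..d}. \<bar>X i j\<bar> \<le> \<alpha>) then 1 else (0::real))" for i
  define e where "e i = \<bar>net \<sigma> d r L K v (X i) - Y i\<bar> * I i" for i
  have e2: "(e i)^2 = (net \<sigma> d r L K v (X i) - Y i)^2 * I i" for i
    by (simp add: e_def I_def)
  have "(l1_risk \<sigma> d r L K n X Y \<alpha> v)^2 = (1 / real n)^2 * (\<Sum>i=1..n. e i)^2"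
    unfolding l1_risk_def e_def I_def by (rule power_mult_distrib)
  also have "\<dots> \<le> (1 / real n)^2 * ((\<Sum>i=1..n. (e i)^2) * real n)"
    using sum_squared_le_sum_of_squares[of e "{1..n}"] by (intro mult_left_mono) simp_all
  also have "\<dots> = (1 / real n) * (\<Sum>i=1..n. (net \<sigma> d r L K v (X i) - Y i)^2 * I i)"
    using e2 by (simp add: power2_eq_square)
  also have "\<dots> \<le> Fn \<sigma> d r L K c2 n X Y \<alpha> v"
    using assms by (simp add: Fn_def I_def sum_nonneg)
  finally show "(l1_risk \<sigma> d r L K n X Y \<alpha> v)^2 \<le> Fn \<sigma> d r L K c2 n X Y \<alpha> v" .
qed

section \<open>Bounded Lipschitz activations\<close>

locale bounded_lipschitz_activation =
  fixes \<sigma> :: "real \<Rightarrow> real" and Cs Ls :: real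
  assumes abs_activation_le: "\<And>x. \<bar>\<sigma> x\<bar> \<le> Cs"
    and activation_lipschitz: "\<And>a b. \<bar>\<sigma> a - \<sigma> b\<bar> \<le> Ls * \<bar>a - b\<bar>"
begin

lemma activation_bound_nonneg: "0 \<le> Cs"
  using abs_activation_le[of 0] by linarith

lemma lipschitz_const_nonneg: "0 \<le> Ls"
  using order_trans[OF abs_ge_zero activation_lipschitz[of 1 0]] by simp

lemma abs_activation_diff_le: "\<bar>a' - a\<bar> \<le> D \<Longrightarrow> \<bar>\<sigma> a' - \<sigma> a\<bar> \<le> Ls * D"
  using activation_lipschitz[of a' a] mult_left_mono[OF _ lipschitz_const_nonneg] by fastforce

lemma abs_hidden_layer_le: "\<bar>hidden_layer \<sigma> d r w l k i x\<bar> \<le> Cs"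
  by (cases "(\<sigma>, d, r, w, l, k, i, x)" rule: hidden_layer.cases)
    (auto simp: abs_activation_le activation_bound_nonneg)

fun layer_lip :: "nat \<Rightarrow> nat \<Rightarrow> nat \<Rightarrow> real" where
  "layer_lip d r 0 = Ls * (real d + 1)"
| "layer_lip d r (Suc m) = Ls * (real r * Cs + real r * layer_lip d r m + 1)"

lemma layer_lip_nonneg: "0 \<le> layer_lip d r m"
  by (induction m) (simp_all add: lipschitz_const_nonneg activation_bound_nonneg)

lemma abs_hidden_layer_diff_le:
  assumes B: "1 \<le> B" and \<alpha>: "1 \<le> \<alpha>" and x: "\<forall>j\<in>{1..d}. \<bar>x j\<bar> \<le> \<alpha>"
    and w: "\<And>l i j. 1 \<le> l \<Longrightarrow> l < L \<Longrightarrow> i \<in> {1..r} \<Longrightarrow> j \<in> {1..r}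
      \<Longrightarrow> \<bar>w (l,k,i,j)\<bar> \<le> B"
    and \<delta>: "\<And>q. \<bar>w' q - w q\<bar> \<le> \<delta>"
    and "Suc m \<le> L" and "i \<in> {1..r}"
  shows "\<bar>hidden_layer \<sigma> d r w' (Suc m) k i x - hidden_layer \<sigma> d r w (Suc m) k i x\<bar>
    \<le> layer_lip d r m * B^m * \<alpha> * \<delta>"
proof -
  have \<delta>0: "0 \<le> \<delta>"
    using order_trans[OF abs_ge_zero \<delta>] .
  show ?thesis
    using assms(6,7)
  proof (induction m arbitrary: i)
    case 0
    have "\<bar>((\<Sum>j=1..d. w' (0,k,i,j) * x j) + w' (0,k,i,0)) - ((\<Sum>j=1..d. w (0,k,i,j) * x j) + w (0,k,i,0))\<bar>
        \<le> (\<Sum>j=1..d. \<bar>w' (0,k,i,j) - w (0,k,i,j)\<bar> * \<bar>x j\<bar> + \<bar>w (0,k,i,j)\<bar> * \<bar>x j - x j\<bar>)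
          + \<bar>w' (0,k,i,0) - w (0,k,i,0)\<bar>"
      by (rule abs_affine_diff_le)
    also have "\<dots> \<le> (\<Sum>j=1..d. \<delta> * \<alpha>) + \<delta>"
      using \<delta> x \<delta>0 by (intro add_mono sum_mono) (auto intro: mult_mono)
    also have "\<dots> \<le> (real d + 1) * \<alpha> * \<delta>"
      using mult_right_mono[OF \<alpha> \<delta>0] by (simp add: algebra_simps)
    finally show ?case
      by (auto dest: abs_activation_diff_le simp: mult.assoc)
  next
    case (Suc m)
    let ?h' = "\<lambda>j. hidden_layer \<sigma> d r w' (Suc m) k j x"
    let ?h = "\<lambda>j. hidden_layer \<sigma> d r w (Suc m) k j x"
    define X where "X = B^Suc m * \<alpha>"
    have X: "1 \<le> X"
      unfolding X_def by (intro one_le_mult one_le_power B \<alpha>)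
    have "\<bar>((\<Sum>j=1..r. w' (Suc m,k,i,j) * ?h' j) + w' (Suc m,k,i,0)) - ((\<Sum>j=1..r. w (Suc m,k,i,j) * ?h j) + w (Suc m,k,i,0))\<bar>
        \<le> (\<Sum>j=1..r. \<bar>w' (Suc m,k,i,j) - w (Suc m,k,i,j)\<bar> * \<bar>?h' j\<bar> + \<bar>w (Suc m,k,i,j)\<bar> * \<bar>?h' j - ?h j\<bar>)
          + \<bar>w' (Suc m,k,i,0) - w (Suc m,k,i,0)\<bar>"
      by (rule abs_affine_diff_le)
    also have "\<dots> \<le> (\<Sum>j=1..r. \<delta> * Cs + B * (layer_lip d r m * B^m * \<alpha> * \<delta>)) + \<delta>"
    proof (rule add_mono[OF sum_mono])
      fix j assume j: "j \<in> {1..r}"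
      have "\<bar>?h' j - ?h j\<bar> \<le> layer_lip d r m * B^m * \<alpha> * \<delta>"
        using Suc.IH[OF _ j] Suc.prems by simp
      moreover have "\<bar>w (Suc m,k,i,j)\<bar> \<le> B"
        using w[of "Suc m" i j] Suc.prems j by simp
      ultimately show "\<bar>w' (Suc m,k,i,j) - w (Suc m,k,i,j)\<bar> * \<bar>?h' j\<bar> + \<bar>w (Suc m,k,i,j)\<bar> * \<bar>?h' j - ?h j\<bar>
          \<le> \<delta> * Cs + B * (layer_lip d r m * B^m * \<alpha> * \<delta>)"
        using \<delta> abs_hidden_layer_le \<delta>0 B by (intro add_mono mult_mono) auto
    qed (rule \<delta>)
    also have "\<dots> = real r * (\<delta> * Cs) + real r * (layer_lip d r m * X * \<delta>) + \<delta>"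
      by (simp add: X_def algebra_simps)
    also have "\<dots> \<le> real r * (Cs * X * \<delta>) + real r * (layer_lip d r m * X * \<delta>) + X * \<delta>"
      using mult_right_mono[OF X \<delta>0] mult_left_mono[OF mult_right_mono[OF X \<delta>0] activation_bound_nonneg]
      by (intro add_mono mult_left_mono order_refl) (simp_all add: ac_simps)
    also have "\<dots> = (real r * Cs + real r * layer_lip d r m + 1) * X * \<delta>"
      by (simp add: algebra_simps)
    finally have "\<bar>\<sigma> ((\<Sum>j=1..r. w' (Suc m,k,i,j) * ?h' j) + w' (Suc m,k,i,0))
        - \<sigma> ((\<Sum>j=1..r. w (Suc m,k,i,j) * ?h j) + w (Suc m,k,i,0))\<bar>
        \<le> Ls * ((real r * Cs + real r * layer_lip d r m + 1) * X * \<delta>)"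
      by (rule abs_activation_diff_le)
    then show ?case
      by (simp add: X_def mult.assoc)
  qed
qed

lemma abs_net_update_diff_le:
  assumes B: "1 \<le> B" and \<alpha>: "1 \<le> \<alpha>" and L: "1 \<le> L" and r: "1 \<le> r" and \<gamma>: "0 \<le> \<gamma>"
    and x: "\<forall>j\<in>{1..d}. \<bar>x j\<bar> \<le> \<alpha>"
    and inner: "\<And>k l i j. k \<in> {1..K} \<Longrightarrow> 1 \<le> l \<Longrightarrow> l < L \<Longrightarrow> i \<in> {1..r} \<Longrightarrow> j \<in> {1..r}
      \<Longrightarrow> \<bar>w (l,k,i,j)\<bar> \<le> B"
    and outer: "\<And>j. j \<in> {1..K} \<Longrightarrow> \<bar>w (L,1,1,j)\<bar> \<le> \<gamma>"
  shows "\<bar>net \<sigma> d r L K (w(p := s)) x - net \<sigma> d r L K w x\<bar>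
    \<le> (Cs + \<gamma> * (layer_lip d r (L-1) * B^(L-1) * \<alpha>)) * \<bar>s - w p\<bar>"
proof -
  obtain pl pk pi pj where p: "p = (pl,pk,pi,pj)"
    by (cases p)
  define w' where "w' = w(p := s)"
  define \<delta> where "\<delta> = \<bar>s - w p\<bar>"
  have \<delta>: "\<And>q. \<bar>w' q - w q\<bar> \<le> \<delta>" and \<delta>0: "0 \<le> \<delta>"
    by (simp_all add: w'_def \<delta>_def)
  let ?h' = "\<lambda>j. hidden_layer \<sigma> d r w' L j 1 x"
  let ?h = "\<lambda>j. hidden_layer \<sigma> d r w L j 1 x"
  let ?M = "layer_lip d r (L-1) * B^(L-1) * \<alpha> * \<delta>"
  have "\<bar>net \<sigma> d r L K w' x - net \<sigma> d r L K w x\<bar>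
      \<le> (\<Sum>j=1..K. \<bar>w' (L,1,1,j) - w (L,1,1,j)\<bar> * \<bar>?h' j\<bar> + \<bar>w (L,1,1,j)\<bar> * \<bar>?h' j - ?h j\<bar>)"
    using abs_affine_diff_le[of "\<lambda>j. w' (L,1,1,j)" ?h' "{1..K}" 0 "\<lambda>j. w (L,1,1,j)" ?h 0]
    by (simp add: net_def)
  also have "\<dots> = (\<Sum>j=1..K. \<bar>w' (L,1,1,j) - w (L,1,1,j)\<bar> * \<bar>?h' j\<bar>)
      + (\<Sum>j=1..K. \<bar>w (L,1,1,j)\<bar> * \<bar>?h' j - ?h j\<bar>)"
    by (rule sum.distrib)
  also have "\<dots> \<le> \<delta> * Cs + \<gamma> * ?M"
    \<comment> \<open>only the outer weight \<open>pj\<close> and the hidden layers of subnetwork \<open>pk\<close> can change,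
      which is why no factor \<open>K\<close> appears\<close>
  proof (rule add_mono)
    have "\<bar>w' (L,1,1,j) - w (L,1,1,j)\<bar> * \<bar>?h' j\<bar> \<le> \<delta> * Cs" if "j \<in> {1..K}" for j
      by (rule mult_mono[OF \<delta> abs_hidden_layer_le \<delta>0 abs_ge_zero])
    then show "(\<Sum>j=1..K. \<bar>w' (L,1,1,j) - w (L,1,1,j)\<bar> * \<bar>?h' j\<bar>) \<le> \<delta> * Cs"
      by (rule sum_le_of_single_support[where i = pj, rotated 2])
        (simp_all add: w'_def p \<delta>0 activation_bound_nonneg)
    have "\<bar>?h' j - ?h j\<bar> \<le> ?M" if "j \<in> {1..K}" for j
      using abs_hidden_layer_diff_le[where w = w and m = "L-1" and i = 1, OF B \<alpha> x inner[OF that] \<delta>] L r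
      by simp
    moreover have "?h' j = ?h j" if "j \<noteq> pk" for j
      using that by (intro hidden_layer_weight_local) (auto simp: w'_def p)
    ultimately show "(\<Sum>j=1..K. \<bar>w (L,1,1,j)\<bar> * \<bar>?h' j - ?h j\<bar>) \<le> \<gamma> * ?M"
      using outer \<gamma> \<delta>0 B \<alpha> layer_lip_nonneg
      by (intro sum_le_of_single_support[where i = pk]) (auto intro: mult_mono)
  qed
  also have "\<dots> = (Cs + \<gamma> * (layer_lip d r (L-1) * B^(L-1) * \<alpha>)) * \<delta>"
    by (simp add: algebra_simps)
  finally show ?thesis
    by (simp add: w'_def \<delta>_def)
qed

lemma abs_Fn_update_diff_le:
  assumes B: "1 \<le> B" and \<alpha>: "1 \<le> \<alpha>" and L: "1 \<le> L" and r: "1 \<le> r" and \<gamma>: "0 \<le> \<gamma>"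
    and c2: "0 \<le> c2"
    and inner: "\<And>k l i j. k \<in> {1..K} \<Longrightarrow> 1 \<le> l \<Longrightarrow> l < L \<Longrightarrow> i \<in> {1..r} \<Longrightarrow> j \<in> {1..r}
      \<Longrightarrow> \<bar>w (l,k,i,j)\<bar> \<le> B"
    and outer: "\<And>j. j \<in> {1..K} \<Longrightarrow> \<bar>w (L,1,1,j)\<bar> \<le> \<gamma>"
  shows "\<exists>C. \<forall>s. \<bar>Fn \<sigma> d r L K c2 n X Y \<alpha> (w(p := s)) - Fn \<sigma> d r L K c2 n X Y \<alpha> w\<bar>
    \<le> (2 * (Cs + \<gamma> * (layer_lip d r (L-1) * B^(L-1) * \<alpha>)) * l1_risk \<sigma> d r L K n X Y \<alpha> w
        + 2 * c2 * \<gamma> + C * \<bar>s - w p\<bar>) * \<bar>s - w p\<bar>"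
proof (intro exI allI)
  fix s
  define N where "N = Cs + \<gamma> * (layer_lip d r (L-1) * B^(L-1) * \<alpha>)"
  define I where "I i = (if (\<forall>j\<in>{1..d}. \<bar>X i j\<bar> \<le> \<alpha>) then 1 else (0::real))" for i
  define \<delta> where "\<delta> = \<bar>s - w p\<bar>"
  let ?net' = "\<lambda>i. net \<sigma> d r L K (w(p := s)) (X i)" and ?net = "\<lambda>i. net \<sigma> d r L K w (X i)"
  let ?sq = "\<lambda>f. \<Sum>i=1..n. (f i - Y i)^2 * I i"
  let ?pen = "\<lambda>w. \<Sum>j=1..K. (w (L,1,1,j))^2"
  have "\<bar>?net' i - ?net i\<bar> \<le> N * \<delta>" if "I i \<noteq> 0" for i
    using that abs_net_update_diff_le[where w = w, OF B \<alpha> L r \<gamma> _ inner outer]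
    by (simp add: I_def N_def \<delta>_def split: if_splits)
  then have data: "\<bar>?sq ?net' - ?sq ?net\<bar>
      \<le> (N * \<delta>)^2 * (\<Sum>i=1..n. I i) + 2 * (N * \<delta>) * (\<Sum>i=1..n. \<bar>?net i - Y i\<bar> * I i)"
    by (rule abs_sum_sq_residual_diff_le) (simp_all add: I_def)
  have "Fn \<sigma> d r L K c2 n X Y \<alpha> (w(p := s)) - Fn \<sigma> d r L K c2 n X Y \<alpha> w
      = (1 / real n) * (?sq ?net' - ?sq ?net) + c2 * (?pen (w(p := s)) - ?pen w)"
    by (simp add: Fn_def I_def algebra_simps)
  then have "\<bar>Fn \<sigma> d r L K c2 n X Y \<alpha> (w(p := s)) - Fn \<sigma> d r L K c2 n X Y \<alpha> w\<bar>
      \<le> (1 / real n) * \<bar>?sq ?net' - ?sq ?net\<bar> + c2 * \<bar>?pen (w(p := s)) - ?pen w\<bar>"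
    using c2 by (simp add: abs_mult order_trans[OF abs_triangle_ineq])
  also have "\<dots> \<le> (1 / real n) * ((N * \<delta>)^2 * (\<Sum>i=1..n. I i) + 2 * (N * \<delta>) * (\<Sum>i=1..n. \<bar>?net i - Y i\<bar> * I i))
      + c2 * (\<delta> * (\<delta> + 2 * \<gamma>))"
    using abs_sum_power2_update_diff_le[where w = w and p = p and s = s, OF outer \<gamma>] data c2
    by (intro add_mono mult_left_mono) (simp_all add: \<delta>_def)
  also have "\<dots> = (2 * N * l1_risk \<sigma> d r L K n X Y \<alpha> w + 2 * c2 * \<gamma>
      + (N^2 * ((1 / real n) * (\<Sum>i=1..n. I i)) + c2) * \<delta>) * \<delta>"
    by (simp add: l1_risk_def I_def power2_eq_square algebra_simps sum_distrib_left)
  finally show "\<bar>Fn \<sigma> d r L K c2 n X Y \<alpha> (w(p := s)) - Fn \<sigma> d r L K c2 n X Y \<alpha> w\<bar>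
      \<le> (2 * (Cs + \<gamma> * (layer_lip d r (L-1) * B^(L-1) * \<alpha>)) * l1_risk \<sigma> d r L K n X Y \<alpha> w + 2 * c2 * \<gamma>
        + (N^2 * ((1 / real n) * (\<Sum>i=1..n. I i)) + c2) * \<bar>s - w p\<bar>) * \<bar>s - w p\<bar>"
    by (simp only: \<delta>_def N_def)
qed

lemma abs_partial_w_Fn_le:
  assumes \<sigma>: "\<And>x. \<sigma> differentiable (at x)"
    and "1 \<le> B" "1 \<le> \<alpha>" "1 \<le> L" "1 \<le> r" "0 \<le> \<gamma>" "0 \<le> c2"
    and "\<And>k l i j. k \<in> {1..K} \<Longrightarrow> 1 \<le> l \<Longrightarrow> l < L \<Longrightarrow> i \<in> {1..r} \<Longrightarrow> j \<in> {1..r}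
      \<Longrightarrow> \<bar>w (l,k,i,j)\<bar> \<le> B"
    and "\<And>j. j \<in> {1..K} \<Longrightarrow> \<bar>w (L,1,1,j)\<bar> \<le> \<gamma>"
  shows "\<bar>partial_w (Fn \<sigma> d r L K c2 n X Y \<alpha>) w p\<bar>
    \<le> 2 * (Cs + \<gamma> * (layer_lip d r (L-1) * B^(L-1) * \<alpha>)) * l1_risk \<sigma> d r L K n X Y \<alpha> w + 2 * c2 * \<gamma>"
proof -
  obtain C where C: "\<And>s. \<bar>Fn \<sigma> d r L K c2 n X Y \<alpha> (w(p := s)) - Fn \<sigma> d r L K c2 n X Y \<alpha> w\<bar>
    \<le> (2 * (Cs + \<gamma> * (layer_lip d r (L-1) * B^(L-1) * \<alpha>)) * l1_risk \<sigma> d r L K n X Y \<alpha> w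
        + 2 * c2 * \<gamma> + C * \<bar>s - w p\<bar>) * \<bar>s - w p\<bar>"
    using abs_Fn_update_diff_le[where w = w, OF assms(2-)] by blast
  have "((\<lambda>s. Fn \<sigma> d r L K c2 n X Y \<alpha> (w(p := s))) has_real_derivative
      partial_w (Fn \<sigma> d r L K c2 n X Y \<alpha>) w p) (at (w p))"
    using Fn_differentiable_weight[OF \<sigma>]
    by (simp add: partial_w_def DERIV_deriv_iff_real_differentiable)
  then show ?thesis
    by (rule has_real_derivative_abs_le_of_quadratic_bound) (use C in simp)
qed

lemma abs_net_diff_le:
  assumes outer: "\<And>j. j \<in> {1..K} \<Longrightarrow> \<bar>w (L,1,1,j)\<bar> \<le> \<gamma>"
    and close: "\<And>j. j \<in> {1..K} \<Longrightarrow> \<bar>w (L,1,1,j) - v (L,1,1,j)\<bar> \<le> \<Delta>"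
  shows "\<bar>net \<sigma> d r L K w x - net \<sigma> d r L K v x\<bar> \<le> real K * (Cs * (2 * \<gamma> + \<Delta>))"
proof -
  have "\<bar>w (L,1,1,j) * hidden_layer \<sigma> d r w L j 1 x - v (L,1,1,j) * hidden_layer \<sigma> d r v L j 1 x\<bar>
      \<le> Cs * (2 * \<gamma> + \<Delta>)" if j: "j \<in> {1..K}" for j
  proof -
    have "\<bar>v (L,1,1,j)\<bar> \<le> \<gamma> + \<Delta>"
      using outer[OF j] close[OF j] by linarith
    then have "\<bar>w (L,1,1,j)\<bar> * \<bar>hidden_layer \<sigma> d r w L j 1 x\<bar>
        + \<bar>v (L,1,1,j)\<bar> * \<bar>hidden_layer \<sigma> d r v L j 1 x\<bar>
        \<le> \<gamma> * Cs + (\<gamma> + \<Delta>) * Cs"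
      using outer[OF j] abs_hidden_layer_le by (intro add_mono mult_mono) auto
    then show ?thesis
      by (auto simp: algebra_simps abs_mult intro: order_trans[OF abs_triangle_ineq4])
  qed
  then have "(\<Sum>j=1..K. \<bar>w (L,1,1,j) * hidden_layer \<sigma> d r w L j 1 x - v (L,1,1,j) * hidden_layer \<sigma> d r v L j 1 x\<bar>)
      \<le> real (card {1..K}) * (Cs * (2 * \<gamma> + \<Delta>))"
    by (rule sum_bounded_above)
  then show ?thesis
    unfolding net_def by (simp add: order_trans[OF sum_abs] flip: sum_subtractf)
qed

lemma l1_risk_le_l1_risk_add:
  assumes "\<And>j. j \<in> {1..K} \<Longrightarrow> \<bar>w (L,1,1,j)\<bar> \<le> \<gamma>"
    and "\<And>j. j \<in> {1..K} \<Longrightarrow> \<bar>w (L,1,1,j) - v (L,1,1,j)\<bar> \<le> \<Delta>"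
  shows "l1_risk \<sigma> d r L K n X Y \<alpha> w \<le> l1_risk \<sigma> d r L K n X Y \<alpha> v + real K * (Cs * (2 * \<gamma> + \<Delta>))"
proof -
  define M where "M = real K * (Cs * (2 * \<gamma> + \<Delta>))"
  define I where "I i = (if (\<forall>j\<in>{1..d}. \<bar>X i j\<bar> \<le> \<alpha>) then 1 else (0::real))" for i
  have net: "\<And>x. \<bar>net \<sigma> d r L K w x - net \<sigma> d r L K v x\<bar> \<le> M"
    unfolding M_def using assms by (rule abs_net_diff_le)
  have M: "0 \<le> M"
    using order_trans[OF abs_ge_zero net] .
  have "\<bar>net \<sigma> d r L K w (X i) - Y i\<bar> * I i \<le> \<bar>net \<sigma> d r L K v (X i) - Y i\<bar> * I i + M" for i
    using abs_triangle_ineq[of "net \<sigma> d r L K w (X i) - net \<sigma> d r L K v (X i)" "net \<sigma> d r L K v (X i) - Y i"]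
      net[of "X i"] M
    by (auto simp: I_def)
  then have "(\<Sum>i=1..n. \<bar>net \<sigma> d r L K w (X i) - Y i\<bar> * I i)
      \<le> (\<Sum>i=1..n. \<bar>net \<sigma> d r L K v (X i) - Y i\<bar> * I i + M)"
    by (rule sum_mono)
  also have "\<dots> = (\<Sum>i=1..n. \<bar>net \<sigma> d r L K v (X i) - Y i\<bar> * I i) + real n * M"
    by (simp add: sum.distrib)
  finally have "(1 / real n) * (\<Sum>i=1..n. \<bar>net \<sigma> d r L K w (X i) - Y i\<bar> * I i)
      \<le> (1 / real n) * (\<Sum>i=1..n. \<bar>net \<sigma> d r L K v (X i) - Y i\<bar> * I i) + M"
    using M by (cases "n = 0") (auto simp: field_simps)
  then show ?thesis
    by (simp add: l1_risk_def I_def M_def)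
qed

lemma l1_risk_le:
  assumes c2: "0 \<le> c2" and K: "1 \<le> K" and \<gamma>: "1 \<le> \<gamma>" and S: "1 \<le> S"
    and outer: "\<And>j. j \<in> {1..K} \<Longrightarrow> \<bar>w (L,1,1,j)\<bar> \<le> \<gamma>"
    and close: "\<And>j. j \<in> {1..K} \<Longrightarrow> \<bar>w (L,1,1,j) - v (L,1,1,j)\<bar> \<le> 2 * S"
    and Fv: "Fn \<sigma> d r L K c2 n X Y \<alpha> v \<le> S^2"
  shows "l1_risk \<sigma> d r L K n X Y \<alpha> w \<le> (4 * Cs + 1) * real K * \<gamma> * S"
proof -
  have "l1_risk \<sigma> d r L K n X Y \<alpha> v \<le> S"
    by (rule order_trans[OF l1_risk_le_sqrt_Fn[OF c2]]) (use real_sqrt_le_mono[OF Fv] S in simp)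
  moreover have "2 * \<gamma> + 2 * S \<le> 4 * \<gamma> * S"
    using mult_left_mono[OF S, of \<gamma>] mult_right_mono[OF \<gamma>, of S] \<gamma> S by linarith
  then have "real K * (Cs * (2 * \<gamma> + 2 * S)) \<le> real K * (Cs * (4 * \<gamma> * S))"
    using activation_bound_nonneg by (intro mult_left_mono) auto
  moreover have "S \<le> real K * \<gamma> * S"
    using mult_right_mono[OF one_le_mult[OF _ \<gamma>] order_trans[OF zero_le_one S], of "real K"] K by simp
  moreover have "l1_risk \<sigma> d r L K n X Y \<alpha> w
      \<le> l1_risk \<sigma> d r L K n X Y \<alpha> v + real K * (Cs * (2 * \<gamma> + 2 * S))"
    using outer close by (rule l1_risk_le_l1_risk_add)
  moreover have "(4 * Cs + 1) * real K * \<gamma> * S = real K * (Cs * (4 * \<gamma> * S)) + real K * \<gamma> * S"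
    by (simp add: algebra_simps)
  ultimately show ?thesis
    by linarith
qed

definition partial_const :: "nat \<Rightarrow> nat \<Rightarrow> nat \<Rightarrow> real \<Rightarrow> real" where
  "partial_const d r L c2 = 2 * (Cs + layer_lip d r (L-1)) * (4 * Cs + 1) + 2 * c2"

lemma partial_const_nonneg: "0 \<le> c2 \<Longrightarrow> 0 \<le> partial_const d r L c2"
  unfolding partial_const_def using activation_bound_nonneg layer_lip_nonneg[of d r "L-1"]
  by (intro add_nonneg_nonneg mult_nonneg_nonneg) simp_all

lemma abs_partial_w_Fn_le_scaled:
  assumes \<sigma>: "\<And>x. \<sigma> differentiable (at x)"
    and B: "1 \<le> B" and \<alpha>: "1 \<le> \<alpha>" and L: "1 \<le> L" and r: "1 \<le> r" and c2: "0 \<le> c2"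
    and K: "1 \<le> K" and \<gamma>: "1 \<le> \<gamma>" and S: "1 \<le> S"
    and inner: "\<And>k l i j. k \<in> {1..K} \<Longrightarrow> 1 \<le> l \<Longrightarrow> l < L \<Longrightarrow> i \<in> {1..r} \<Longrightarrow> j \<in> {1..r}
      \<Longrightarrow> \<bar>w (l,k,i,j)\<bar> \<le> B"
    and outer: "\<And>j. j \<in> {1..K} \<Longrightarrow> \<bar>w (L,1,1,j)\<bar> \<le> \<gamma>"
    and close: "\<And>j. j \<in> {1..K} \<Longrightarrow> \<bar>w (L,1,1,j) - v (L,1,1,j)\<bar> \<le> 2 * S"
    and Fv: "Fn \<sigma> d r L K c2 n X Y \<alpha> v \<le> S^2"
  shows "\<bar>partial_w (Fn \<sigma> d r L K c2 n X Y \<alpha>) w p\<bar>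
    \<le> partial_const d r L c2 * (real K * \<gamma>^2 * B^(L-1) * \<alpha> * S)"
proof -
  define Z where "Z = \<gamma> * B^(L-1) * \<alpha>"
  define E where "E = l1_risk \<sigma> d r L K n X Y \<alpha> w"
  have Z: "1 \<le> Z"
    unfolding Z_def by (intro one_le_mult one_le_power \<gamma> B \<alpha>)
  have KZS: "1 \<le> real K * Z * S"
    using K Z S by (intro one_le_mult) simp_all
  have "Cs + \<gamma> * (layer_lip d r (L-1) * B^(L-1) * \<alpha>) \<le> (Cs + layer_lip d r (L-1)) * Z"
    using mult_left_mono[OF Z activation_bound_nonneg] by (simp add: Z_def algebra_simps)
  moreover have "0 \<le> E" and "E \<le> (4 * Cs + 1) * real K * \<gamma> * S"
    using l1_risk_nonneg l1_risk_le[OF c2 K \<gamma> S outer close Fv] by (simp_all add: E_def)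
  ultimately have "2 * (Cs + \<gamma> * (layer_lip d r (L-1) * B^(L-1) * \<alpha>)) * E
      \<le> 2 * ((Cs + layer_lip d r (L-1)) * Z) * ((4 * Cs + 1) * real K * \<gamma> * S)"
    using activation_bound_nonneg layer_lip_nonneg[of d r "L-1"] Z
    by (intro mult_mono[OF mult_left_mono]) auto
  moreover have "2 * c2 * \<gamma> \<le> 2 * c2 * \<gamma> * (real K * Z * S)"
    using mult_left_mono[OF KZS, of "2 * c2 * \<gamma>"] c2 \<gamma> by simp
  moreover have "\<bar>partial_w (Fn \<sigma> d r L K c2 n X Y \<alpha>) w p\<bar>
      \<le> 2 * (Cs + \<gamma> * (layer_lip d r (L-1) * B^(L-1) * \<alpha>)) * E + 2 * c2 * \<gamma>"
    unfolding E_def using \<sigma> B \<alpha> L r order_trans[OF zero_le_one \<gamma>] c2 inner outer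
    by (rule abs_partial_w_Fn_le)
  moreover have "partial_const d r L c2 * (real K * \<gamma>^2 * B^(L-1) * \<alpha> * S)
      = 2 * ((Cs + layer_lip d r (L-1)) * Z) * ((4 * Cs + 1) * real K * \<gamma> * S)
        + 2 * c2 * \<gamma> * (real K * Z * S)"
    by (simp add: partial_const_def Z_def power2_eq_square algebra_simps)
  ultimately show ?thesis
    by linarith
qed

definition grad_const :: "nat \<Rightarrow> nat \<Rightarrow> nat \<Rightarrow> real \<Rightarrow> real" where
  "grad_const d r L c2 = sqrt (real (1 + (L-1)*r*(r+1) + r*(d+1))) * partial_const d r L c2"

lemma grad_const_pos:
  assumes "0 < c2"
  shows "0 < grad_const d r L c2"
proof -
  have "0 < partial_const d r L c2"
    unfolding partial_const_def using assms activation_bound_nonneg layer_lip_nonneg[of d r "L-1"]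
    by (intro add_nonneg_pos mult_nonneg_nonneg) simp_all
  moreover have "0 < sqrt (real (1 + (L-1)*r*(r+1) + r*(d+1)))"
    by (simp only: real_sqrt_gt_0_iff of_nat_0_less_iff)
  ultimately show ?thesis
    unfolding grad_const_def by simp
qed

lemma grad_norm_Fn_le:
  assumes \<sigma>: "\<And>x. \<sigma> differentiable (at x)"
    and B: "1 \<le> B" and \<alpha>: "1 \<le> \<alpha>" and L: "1 \<le> L" and r: "1 \<le> r" and c2: "0 \<le> c2"
    and K: "1 \<le> K" and \<gamma>: "1 \<le> \<gamma>" and S: "1 \<le> S"
    and outer: "\<forall>k\<in>{1..K}. \<bar>w (L,1,1,k)\<bar> \<le> \<gamma>"
    and inner: "\<forall>p\<in>weight_idx d r L K. fst p \<in> {1..L-1} \<longrightarrow> \<bar>w p\<bar> \<le> B"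
    and close: "max_norm d r L K (\<lambda>p. w p - v p) \<le> 2 * S"
    and Fv: "Fn \<sigma> d r L K c2 n X Y \<alpha> v \<le> S^2"
  shows "grad_norm d r L K (Fn \<sigma> d r L K c2 n X Y \<alpha>) w
    \<le> grad_const d r L c2 * real K powr (3/2) * B^(L-1) * \<gamma>^2 * \<alpha> * S"
proof -
  let ?Q = "real K * \<gamma>^2 * B^(L-1) * \<alpha> * S"
  have inner': "\<bar>w (l,k,i,j)\<bar> \<le> B"
    if "k \<in> {1..K}" "1 \<le> l" "l < L" "i \<in> {1..r}" "j \<in> {1..r}" for k l i j
    using inner that by (auto simp: weight_idx_def)
  have close': "\<bar>w (L,1,1,j) - v (L,1,1,j)\<bar> \<le> 2 * S" if "j \<in> {1..K}" for j
    using abs_le_max_norm[of "(L,1,1,j)" d r L K "\<lambda>p. w p - v p"] close that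
    by (auto simp: weight_idx_def)
  have "grad_norm d r L K (Fn \<sigma> d r L K c2 n X Y \<alpha>) w
      \<le> sqrt (real (card (weight_idx d r L K))) * (partial_const d r L c2 * ?Q)"
    using abs_partial_w_Fn_le_scaled[OF \<sigma> B \<alpha> L r c2 K \<gamma> S inner' _ close' Fv] outer
    by (intro grad_norm_le) auto
  also have "\<dots> \<le> sqrt (real K * real (1 + (L-1)*r*(r+1) + r*(d+1))) * (partial_const d r L c2 * ?Q)"
  proof (intro mult_right_mono real_sqrt_le_mono)
    show "real (card (weight_idx d r L K)) \<le> real K * real (1 + (L-1)*r*(r+1) + r*(d+1))"
      using card_weight_idx_le[of d r L K] by (simp only: of_nat_mult[symmetric] of_nat_le_iff)
    show "0 \<le> partial_const d r L c2 * ?Q"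
      using partial_const_nonneg[OF c2] \<gamma> B \<alpha> S by simp
  qed
  also have "\<dots> = grad_const d r L c2 * (real K * sqrt (real K)) * B^(L-1) * \<gamma>^2 * \<alpha> * S"
    by (simp add: grad_const_def real_sqrt_mult power2_eq_square ac_simps)
  also have "real K * sqrt (real K) = real K powr (3/2)"
    by (simp add: powr_three_halves)
  finally show ?thesis .
qed

lemma grad_norm_Fn_le_sqrt_risk:
  fixes Ln tn :: real
  assumes \<sigma>: "\<And>x. \<sigma> differentiable (at x)"
    and L: "1 \<le> L" and r: "1 \<le> r" and c2: "0 \<le> c2"
    and K: "1 \<le> K" and \<alpha>: "1 \<le> \<alpha>" and Ln: "0 < Ln" and tn: "Ln \<le> tn" and \<gamma>: "1 \<le> \<gamma>"
    and B: "1 \<le> B"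
    and outer: "\<forall>k\<in>{1..K}. \<bar>w (L,1,1,k)\<bar> \<le> \<gamma>"
    and inner: "\<forall>p\<in>weight_idx d r L K. fst p \<in> {1..L-1} \<longrightarrow> \<bar>w p\<bar> \<le> B"
    and close: "(max_norm d r L K (\<lambda>p. w p - v p))^2
      \<le> 2 * tn / Ln * max (Fn \<sigma> d r L K c2 n X Y \<alpha> v) 1"
  shows "grad_norm d r L K (Fn \<sigma> d r L K c2 n X Y \<alpha>) w
    \<le> grad_const d r L c2 * real K powr (3/2) * B ^ (2 * L) * \<gamma>^2 * \<alpha>^2
       * sqrt (tn / Ln * max (Fn \<sigma> d r L K c2 n X Y \<alpha> v) 1)"
proof -
  define R where "R = tn / Ln * max (Fn \<sigma> d r L K c2 n X Y \<alpha> v) 1"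
  define S where "S = sqrt R"
  have R: "max (Fn \<sigma> d r L K c2 n X Y \<alpha> v) 1 \<le> R"
    unfolding R_def using mult_right_mono[of 1 "tn / Ln" "max (Fn \<sigma> d r L K c2 n X Y \<alpha> v) 1"] Ln tn
    by simp
  then have S: "1 \<le> S" and S2: "S^2 = R"
    by (simp_all add: S_def)
  have "max_norm d r L K (\<lambda>p. w p - v p) \<le> 2 * S"
  proof (rule power2_le_imp_le)
    show "(max_norm d r L K (\<lambda>p. w p - v p))^2 \<le> (2 * S)^2"
      using close S2 R by (simp add: R_def power_mult_distrib)
  qed (use S in simp)
  moreover have "Fn \<sigma> d r L K c2 n X Y \<alpha> v \<le> S^2"
    using R S2 by simp
  ultimately have "grad_norm d r L K (Fn \<sigma> d r L K c2 n X Y \<alpha>) w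
      \<le> grad_const d r L c2 * real K powr (3/2) * B^(L-1) * \<gamma>^2 * \<alpha> * S"
    using grad_norm_Fn_le[OF \<sigma> B \<alpha> L r c2 K \<gamma> S outer inner] by blast
  also have "\<dots> \<le> grad_const d r L c2 * real K powr (3/2) * B ^ (2 * L) * \<gamma>^2 * \<alpha>^2 * S"
    \<comment> \<open>the argument gives \<open>B^(L-1) * \<alpha>\<close>; the stated factor \<open>B^(2*L) * \<alpha>^2\<close> is weaker\<close>
  proof -
    have BA: "B^(L-1) * \<alpha> \<le> B^(2*L) * \<alpha>^2"
      using B \<alpha> mult_right_mono[OF \<alpha>, of \<alpha>]
      by (intro mult_mono power_increasing) (simp_all add: power2_eq_square)
    have G: "0 \<le> grad_const d r L c2 * real K powr (3/2) * \<gamma>^2 * S"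
      using partial_const_nonneg[OF c2] S by (simp add: grad_const_def)
    show ?thesis
      using mult_left_mono[OF BA G] by (simp add: ac_simps)
  qed
  finally show ?thesis
    by (simp add: S_def R_def)
qed

end

theorem lemma2:
  fixes \<sigma> :: "real \<Rightarrow> real" and d r L :: nat and c2 :: real
  assumes "bounded (range \<sigma>)"
    and "\<forall>x. \<sigma> differentiable (at x)"
    and "bounded (range (deriv \<sigma>))"
    and "d \<ge> 1" and "L \<ge> 1" and "r \<ge> 2 * d" and "c2 > 0"
  shows "\<exists>c5>0. \<forall>(K::nat) (n::nat) (X::nat \<Rightarrow> nat \<Rightarrow> real) (Y::nat \<Rightarrow> real)
            (\<alpha>::real) (Ln::real) (tn::real) (\<gamma>::real) (B::real) (w::weights) (v::weights).
     K \<ge> 1 \<and> n \<ge> 1 \<and> \<alpha> \<ge> 1 \<and> Ln > 0 \<and> tn \<ge> Ln \<and> \<gamma> \<ge> 1 \<and> B \<ge> 1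
     \<and> (\<forall>k\<in>{1..K}. \<bar>w (L,1,1,k)\<bar> \<le> \<gamma>)
     \<and> (\<forall>p\<in>weight_idx d r L K. fst p \<in> {1..L-1} \<longrightarrow> \<bar>w p\<bar> \<le> B)
     \<and> (max_norm d r L K (\<lambda>p. w p - v p))^2
          \<le> 2 * tn / Ln * max (Fn \<sigma> d r L K c2 n X Y \<alpha> v) 1
     \<longrightarrow> grad_norm d r L K (Fn \<sigma> d r L K c2 n X Y \<alpha>) w
          \<le> c5 * real K powr (3/2) * B ^ (2 * L) * \<gamma>^2 * \<alpha>^2
             * sqrt (tn / Ln * max (Fn \<sigma> d r L K c2 n X Y \<alpha> v) 1)"
proof -
  obtain Cs where "\<And>x. \<bar>\<sigma> x\<bar> \<le> Cs"
    using assms(1) by (auto simp: bounded_iff)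
  moreover obtain Ls where "\<And>x. \<bar>deriv \<sigma> x\<bar> \<le> Ls"
    using assms(3) by (auto simp: bounded_iff)
  ultimately interpret bounded_lipschitz_activation \<sigma> Cs Ls
    using lipschitz_of_bounded_deriv[of \<sigma> Ls] assms(2) by unfold_locales blast+
  have r: "1 \<le> r"
    \<comment> \<open>all that is used of \<open>r \<ge> 2 * d\<close>\<close>
    using assms(4,6) by linarith
  show ?thesis
    by (intro exI[of _ "grad_const d r L c2"] conjI allI impI grad_const_pos[OF assms(7)], elim conjE)
      (rule grad_norm_Fn_le_sqrt_risk[OF assms(2)[rule_format] assms(5) r less_imp_le[OF assms(7)]];
        assumption)
qed

end
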